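(* Let $X$ be a finite set, $F_X,F'_X$ filtrations over $X$ with facegrams $C_X,C'_X$. Then $$d_{\mathrm{B}}(\mathbf{mgm}(F_X),\mathbf{mgm}(F'_X))\leq d_\infty(\mathbf{mgm}^*(C_X),\mathbf{mgm}^*(C'_X))\leq d_{\mathrm{I}}(C_X,C'_X)=d_{\mathrm{I}}(F_X,F'_X).$$
   Context: $\mathbf{pow}(X)$: nonempty subsets of $X$. Filtration: order-preserving $F_X:(\mathbf{pow}(X),\subset)\to(\mathbb{R},\leq)$. Its facegram: $C_X(t)$ = inclusion-maximal elements of $\{\sigma\mid F_X(\sigma)\leq t\}$. Face-sets are ordered by $\mathcal{S}\leq\mathcal{S}'$ iff each member of $\mathcal{S}$ lies in a member of $\mathcal{S}'$. Lifespan $I_\sigma:=\{t\mid\sigma\in C_X(t)\}$, which is empty or of the form $[a,b)$, $a\in\mathbb{R}$, $b\in\mathbb{R}\cup\{\infty\}$. $\mathbf{mgm}$ is the multiset of nonempty lifespans (one per $\sigma$); $\mathbf{mgm}^*(C_X)=\{(\sigma,I_\sigma)\mid I_\sigma\neq\emptyset\}$. Bottleneck distance between multisets $A,B$ of intervals $[a,b)$: an $\varepsilon$-matching is a bijection $\varphi:A'\to B'$ between sub-multisets with $\max(|a-c|,|b-d|)\leq\varepsilon$ whenever $\varphi([a,b))=[c,d)$ (using $|\infty-\infty|=0$), and $|b-a|\leq2\varepsilon$ for every unmatched $[a,b)$; $d_{\mathrm{B}}(A,B)$ is the infimum of such $\varepsilon$. $d_\infty(\mathbf{mgm}^*(C_X),\mathbf{mgm}^*(C'_X)):=\max_{\sigma\in\mathbf{pow}(X)}d_{\mathrm{B}}(I^{C_X}_\sigma,I^{C'_X}_\sigma)$,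 each lifespan viewed as a multiset with zero or one interval. $d_{\mathrm{I}}(C_X,C'_X):=\inf\{\varepsilon\geq0\mid C_X(t)\leq C'_X(t+\varepsilon),\ C'_X(t)\leq C_X(t+\varepsilon)\ \forall t\}$; $d_{\mathrm{I}}(F_X,F'_X):=\max_{\sigma}|F_X(\sigma)-F'_X(\sigma)|$. *)

theory Defs
  imports "HOL-Analysis.Analysis" "HOL-Library.Multiset"
begin

definition pow :: "'a set \<Rightarrow> 'a set set" where
  "pow X = {\<sigma>. \<sigma> \<subseteq> X \<and> \<sigma> \<noteq> {}}"

definition filtration :: "'a set \<Rightarrow> ('a set \<Rightarrow> real) \<Rightarrow> bool" where
  "filtration X F \<longleftrightarrow> (\<forall>\<sigma>\<in>pow X. \<forall>\<tau>\<in>pow X. \<sigma> \<subseteq> \<tau> \<longrightarrow> F \<sigma> \<le> F \<tau>)"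

definition facegram :: "'a set \<Rightarrow> ('a set \<Rightarrow> real) \<Rightarrow> real \<Rightarrow> 'a set set" where
  "facegram X F t =
     {\<sigma> \<in> pow X. F \<sigma> \<le> t \<and> \<not> (\<exists>\<tau>\<in>pow X. F \<tau> \<le> t \<and> \<sigma> \<subset> \<tau>)}"

definition faceset_le :: "'a set set \<Rightarrow> 'a set set \<Rightarrow> bool" where
  "faceset_le S S' \<longleftrightarrow> (\<forall>\<sigma>\<in>S. \<exists>\<tau>\<in>S'. \<sigma> \<subseteq> \<tau>)"

definition lifespan :: "(real \<Rightarrow> 'a set set) \<Rightarrow> 'a set \<Rightarrow> real set" where
  "lifespan C \<sigma> = {t. \<sigma> \<in> C t}"

text \<open>An interval [a,b) with a real and b in R \<union> {\<infinity>} is represented by the pair (a,b).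
  A nonempty lifespan (which is of the form [a,b)) is converted to its endpoints.\<close>
type_synonym interval = "real \<times> ereal"

definition to_interval :: "real set \<Rightarrow> interval" where
  "to_interval I = (Inf I, if bdd_above I then ereal (Sup I) else \<infinity>)"

definition lifespan_mset :: "(real \<Rightarrow> 'a set set) \<Rightarrow> 'a set \<Rightarrow> interval multiset" where
  "lifespan_mset C \<sigma> = (if lifespan C \<sigma> = {} then {#} else {# to_interval (lifespan C \<sigma>) #})"

definition mgm :: "'a set \<Rightarrow> ('a set \<Rightarrow> real) \<Rightarrow> interval multiset" where
  "mgm X F = image_mset (\<lambda>\<sigma>. to_interval (lifespan (facegram X F) \<sigma>))
      (mset_set {\<sigma> \<in> pow X. lifespan (facegram X F) \<sigma> \<noteq> {}})"

definition end_dist :: "ereal \<Rightarrow> ereal \<Rightarrow> ereal" where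
  "end_dist b d = (if b = \<infinity> \<and> d = \<infinity> then 0
                  else if b = \<infinity> \<or> d = \<infinity> then \<infinity> else \<bar>b - d\<bar>)"

text \<open>An \<epsilon>-matching between A and B, encoded as a multiset M of matched pairs
  (a bijection between the sub-multisets image fst M of A and image snd M of B).\<close>
definition eps_matching :: "real \<Rightarrow> interval multiset \<Rightarrow> interval multiset \<Rightarrow> (interval \<times> interval) multiset \<Rightarrow> bool" where
  "eps_matching \<epsilon> A B M \<longleftrightarrow>
     image_mset fst M \<subseteq># A \<and> image_mset snd M \<subseteq># B \<and>
     (\<forall>p \<in># M. \<bar>fst (fst p) - fst (snd p)\<bar> \<le> \<epsilon> \<and> end_dist (snd (fst p)) (snd (snd p)) \<le> ereal \<epsilon>) \<and>
     (\<forall>i \<in># A - image_mset fst M. \<bar>snd i - ereal (fst i)\<bar> \<le> ereal (2 * \<epsilon>)) \<and>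
     (\<forall>i \<in># B - image_mset snd M. \<bar>snd i - ereal (fst i)\<bar> \<le> ereal (2 * \<epsilon>))"

text \<open>Bottleneck distance (infimum over \<epsilon> \<ge> 0; \<infinity> if no matching exists).\<close>
definition bottleneck :: "interval multiset \<Rightarrow> interval multiset \<Rightarrow> ereal" where
  "bottleneck A B = Inf {ereal \<epsilon> | \<epsilon>. \<epsilon> \<ge> 0 \<and> (\<exists>M. eps_matching \<epsilon> A B M)}"

text \<open>d_\<infinity> between the labelled merge grams mgm^*(C) and mgm^*(C'):
  maximum over faces of the bottleneck distance of the lifespans
  (with the convention that the maximum over the empty set is 0).\<close>
definition d_inf_mgm_star :: "'a set \<Rightarrow> (real \<Rightarrow> 'a set set) \<Rightarrow> (real \<Rightarrow> 'a set set) \<Rightarrow> ereal" where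
  "d_inf_mgm_star X C C' =
     Sup (insert 0 ((\<lambda>\<sigma>. bottleneck (lifespan_mset C \<sigma>) (lifespan_mset C' \<sigma>)) ` pow X))"

definition d_I_facegram :: "(real \<Rightarrow> 'a set set) \<Rightarrow> (real \<Rightarrow> 'a set set) \<Rightarrow> ereal" where
  "d_I_facegram C C' = Inf {ereal \<epsilon> | \<epsilon>. \<epsilon> \<ge> 0 \<and>
      (\<forall>t. faceset_le (C t) (C' (t + \<epsilon>)) \<and> faceset_le (C' t) (C (t + \<epsilon>)))}"

definition d_I_filtration :: "'a set \<Rightarrow> ('a set \<Rightarrow> real) \<Rightarrow> ('a set \<Rightarrow> real) \<Rightarrow> real" where
  "d_I_filtration X F F' = Max (insert 0 ((\<lambda>\<sigma>. \<bar>F \<sigma> - F' \<sigma>\<bar>) ` pow X))"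

end

theory Submission
  imports Defs
begin

text \<open>
  The lifespan of a face \<sigma> in the facegram of F is the interval from F \<sigma> to the minimum of F
  over the proper supersets of \<sigma> (unbounded if there are none).  Both endpoints move by at most
  \<open>\<parallel>F - F'\<parallel>\<^sub>\<infinity>\<close> when F is replaced by F', so the lifespans of \<sigma> under F and F' are
  \<open>\<parallel>F - F'\<parallel>\<^sub>\<infinity>\<close>-matched; the interleaving distance of the facegrams equals \<open>\<parallel>F - F'\<parallel>\<^sub>\<infinity>\<close>
  because \<open>C(t) \<le> C'(t + \<epsilon>)\<close> for all t says exactly \<open>F' \<le> F + \<epsilon>\<close>.  Since mgm is the sum over
  all faces of the one-point lifespan multisets, the face-wise matchings add up to a matching of
  the merge grams, which gives the first inequality.
\<close>

lemma finite_pow: "finite X \<Longrightarrow> finite (pow X)"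
  unfolding pow_def by (rule finite_subset[of _ "Pow X"]) auto

lemma eps_matching_mono:
  "eps_matching e A B M \<Longrightarrow> e \<le> e' \<Longrightarrow> eps_matching e' A B M"
  unfolding eps_matching_def
  by (smt (verit, ccfv_SIG) ereal_less_eq(3) order_trans)

lemma eps_matching_empty: "eps_matching e {#} {#} {#}"
  unfolding eps_matching_def by auto

lemma subseteq_mset_diff_add:
  fixes A1 A2 C1 C2 :: "'b multiset"
  assumes "C1 \<subseteq># A1" "C2 \<subseteq># A2"
  shows "(A1 + A2) - (C1 + C2) = (A1 - C1) + (A2 - C2)"
  using assms by (simp add: multiset_eq_iff subseteq_mset_def)

lemma eps_matching_add:
  assumes "eps_matching e A1 B1 M1" "eps_matching e A2 B2 M2"
  shows "eps_matching e (A1 + A2) (B1 + B2) (M1 + M2)"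
proof -
  have sub: "image_mset fst M1 \<subseteq># A1" "image_mset fst M2 \<subseteq># A2"
            "image_mset snd M1 \<subseteq># B1" "image_mset snd M2 \<subseteq># B2"
    using assms unfolding eps_matching_def by auto
  have "(A1 + A2) - image_mset fst (M1 + M2) = (A1 - image_mset fst M1) + (A2 - image_mset fst M2)"
   and "(B1 + B2) - image_mset snd (M1 + M2) = (B1 - image_mset snd M1) + (B2 - image_mset snd M2)"
    using subseteq_mset_diff_add[OF sub(1,2)] subseteq_mset_diff_add[OF sub(3,4)] by simp_all
  moreover have "image_mset fst (M1 + M2) \<subseteq># A1 + A2" "image_mset snd (M1 + M2) \<subseteq># B1 + B2"
    using sub by (simp_all add: subset_mset.add_mono)
  ultimately show ?thesis
    using assms unfolding eps_matching_def by (metis set_mset_union Un_iff)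
qed

lemma eps_matching_sum:
  "finite S \<Longrightarrow> (\<And>s. s \<in> S \<Longrightarrow> eps_matching e (A s) (B s) (M s)) \<Longrightarrow>
     eps_matching e (\<Sum>s\<in>S. A s) (\<Sum>s\<in>S. B s) (\<Sum>s\<in>S. M s)"
  by (induction S rule: finite_induct) (auto simp: eps_matching_empty intro: eps_matching_add)

lemma bottleneck_le_matching:
  "eps_matching e A B M \<Longrightarrow> 0 \<le> e \<Longrightarrow> bottleneck A B \<le> ereal e"
  unfolding bottleneck_def by (auto intro!: Inf_lower)

lemma eps_matching_if_bottleneck_less:
  assumes "bottleneck A B < ereal e"
  shows "\<exists>M. eps_matching e A B M"
proof -
  from assms obtain e' M where "eps_matching e' A B M" "e' < e"
    unfolding bottleneck_def Inf_less_iff by auto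
  then show ?thesis using eps_matching_mono by (meson less_imp_le)
qed

lemma bottleneck_leI:
  assumes "0 \<le> x" "\<And>e. x < ereal e \<Longrightarrow> \<exists>M. eps_matching e A B M"
  shows "bottleneck A B \<le> x"
  unfolding bottleneck_def Inf_le_iff
proof (intro allI impI)
  fix y :: ereal assume "x < y"
  then obtain z where z: "x < z" "z < y" using dense by blast
  with assms(1) obtain e where e: "z = ereal e"
    by (cases z) auto
  with z assms(1) have "0 < ereal e" by order
  then have "0 \<le> e" by simp
  with assms(2)[of e] z e show "\<exists>s\<in>{ereal \<epsilon> |\<epsilon>. 0 \<le> \<epsilon> \<and> (\<exists>M. eps_matching \<epsilon> A B M)}. s < y"
    by auto
qed

lemma facegram_covers:
  assumes "finite X" "\<sigma> \<in> pow X" "F \<sigma> \<le> t"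
  shows "\<exists>\<tau>\<in>facegram X F t. \<sigma> \<subseteq> \<tau>"
proof -
  let ?A = "{\<tau>\<in>pow X. F \<tau> \<le> t \<and> \<sigma> \<subseteq> \<tau>}"
  have "finite ?A" "?A \<noteq> {}" using finite_pow[OF assms(1)] assms by auto
  then obtain m where m: "m \<in> ?A" "\<forall>b\<in>?A. m \<le> b \<longrightarrow> m = b"
    using finite_has_maximal by blast
  then have "m \<in> facegram X F t"
    unfolding facegram_def by auto
  with m show ?thesis by auto
qed

lemma faceset_le_facegram_shift_iff:
  assumes "finite X" "filtration X F'"
  shows "(\<forall>t. faceset_le (facegram X F t) (facegram X F' (t + e)))
           \<longleftrightarrow> (\<forall>\<sigma>\<in>pow X. F' \<sigma> \<le> F \<sigma> + e)"
proof
  assume shift: "\<forall>t. faceset_le (facegram X F t) (facegram X F' (t + e))"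
  show "\<forall>\<sigma>\<in>pow X. F' \<sigma> \<le> F \<sigma> + e"
  proof
    fix \<sigma> assume \<sigma>: "\<sigma> \<in> pow X"
    obtain \<rho> where \<rho>: "\<rho> \<in> facegram X F (F \<sigma>)" "\<sigma> \<subseteq> \<rho>"
      using facegram_covers[OF assms(1) \<sigma>, of F "F \<sigma>"] by auto
    then obtain \<tau> where \<tau>: "\<tau> \<in> facegram X F' (F \<sigma> + e)" "\<rho> \<subseteq> \<tau>"
      using shift unfolding faceset_le_def by blast
    then have "\<tau> \<in> pow X" "F' \<tau> \<le> F \<sigma> + e" unfolding facegram_def by auto
    moreover have "F' \<sigma> \<le> F' \<tau>"
      using assms(2) \<sigma> \<rho>(2) \<tau>(2) \<open>\<tau> \<in> pow X\<close> unfolding filtration_def by blast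
    ultimately show "F' \<sigma> \<le> F \<sigma> + e" by linarith
  qed
next
  assume bound: "\<forall>\<sigma>\<in>pow X. F' \<sigma> \<le> F \<sigma> + e"
  show "\<forall>t. faceset_le (facegram X F t) (facegram X F' (t + e))"
    unfolding faceset_le_def
  proof (intro allI ballI)
    fix t \<sigma> assume "\<sigma> \<in> facegram X F t"
    then have "\<sigma> \<in> pow X" "F \<sigma> \<le> t" unfolding facegram_def by auto
    with bound have "F' \<sigma> \<le> t + e" by force
    then show "\<exists>\<tau>\<in>facegram X F' (t + e). \<sigma> \<subseteq> \<tau>"
      using facegram_covers[OF assms(1) \<open>\<sigma> \<in> pow X\<close>] by blast
  qed
qed

lemma d_I_filtration_nonneg: "finite X \<Longrightarrow> 0 \<le> d_I_filtration X F F'"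
  unfolding d_I_filtration_def by (simp add: finite_pow)

lemma d_I_filtration_ge:
  "finite X \<Longrightarrow> \<sigma> \<in> pow X \<Longrightarrow> \<bar>F \<sigma> - F' \<sigma>\<bar> \<le> d_I_filtration X F F'"
  unfolding d_I_filtration_def by (simp add: finite_pow)

lemma d_I_filtration_le:
  "finite X \<Longrightarrow> 0 \<le> e \<Longrightarrow> (\<And>\<sigma>. \<sigma> \<in> pow X \<Longrightarrow> \<bar>F \<sigma> - F' \<sigma>\<bar> \<le> e) \<Longrightarrow> d_I_filtration X F F' \<le> e"
  unfolding d_I_filtration_def by (simp add: finite_pow)

lemma d_I_facegram_eq_d_I_filtration:
  assumes "finite X" "filtration X F" "filtration X F'"
  shows "d_I_facegram (facegram X F) (facegram X F') = ereal (d_I_filtration X F F')"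
proof -
  have interleaved_iff:
    "(\<forall>t. faceset_le (facegram X F t) (facegram X F' (t + \<epsilon>))
         \<and> faceset_le (facegram X F' t) (facegram X F (t + \<epsilon>)))
       \<longleftrightarrow> (\<forall>\<sigma>\<in>pow X. \<bar>F \<sigma> - F' \<sigma>\<bar> \<le> \<epsilon>)" for \<epsilon>
    unfolding all_conj_distrib faceset_le_facegram_shift_iff[OF assms(1,3)]
      faceset_le_facegram_shift_iff[OF assms(1,2)]
    by (auto simp: abs_le_iff)
  show ?thesis
    unfolding d_I_facegram_def interleaved_iff
    by (rule cInf_eq_minimum)
       (auto simp: d_I_filtration_nonneg d_I_filtration_ge d_I_filtration_le assms(1))
qed

lemma lifespan_facegram:
  "\<sigma> \<in> pow X \<Longrightarrow>
     lifespan (facegram X F) \<sigma> = {t. F \<sigma> \<le> t \<and> (\<forall>\<tau>\<in>{\<tau>\<in>pow X. \<sigma> \<subset> \<tau>}. t < F \<tau>)}"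
  unfolding lifespan_def facegram_def by auto

lemma lifespan_facegram_atLeastLessThan:
  assumes "finite X" "\<sigma> \<in> pow X" "{\<tau>\<in>pow X. \<sigma> \<subset> \<tau>} \<noteq> {}"
  shows "lifespan (facegram X F) \<sigma> = {F \<sigma>..<Min (F ` {\<tau>\<in>pow X. \<sigma> \<subset> \<tau>})}"
proof -
  have "finite (F ` {\<tau>\<in>pow X. \<sigma> \<subset> \<tau>})" using finite_pow[OF assms(1)] by auto
  from Min_gr_iff[OF this] show ?thesis
    unfolding lifespan_facegram[OF assms(2)] using assms(3) by auto
qed

lemma lifespan_facegram_atLeast:
  "\<sigma> \<in> pow X \<Longrightarrow> {\<tau>\<in>pow X. \<sigma> \<subset> \<tau>} = {} \<Longrightarrow> lifespan (facegram X F) \<sigma> = {F \<sigma>..}"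
  unfolding lifespan_facegram by auto

lemma to_interval_atLeastLessThan: "a < b \<Longrightarrow> to_interval {a..<b} = (a, ereal b)"
  unfolding to_interval_def by (simp add: cInf_atLeastLessThan cSup_atLeastLessThan)

lemma not_bdd_above_atLeast: "\<not> bdd_above {a::real..}"
proof
  assume "bdd_above {a..}"
  then obtain M where "\<And>x. a \<le> x \<Longrightarrow> x \<le> M" unfolding bdd_above_def by auto
  from this[of "max a M + 1"] show False by linarith
qed

lemma to_interval_atLeast: "to_interval {a..} = (a, \<infinity>)"
  unfolding to_interval_def using not_bdd_above_atLeast by (simp add: cInf_atLeast)

lemma eps_matching_atLeastLessThan:
  assumes "\<bar>a - a'\<bar> \<le> e" "\<bar>b - b'\<bar> \<le> e"
  shows "\<exists>M. eps_matching e (if {a..<b} = {} then {#} else {#to_interval {a..<b}#})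
                             (if {a'..<b'} = {} then {#} else {#to_interval {a'..<b'}#}) M"
proof -
  have "0 \<le> e" using assms(1) abs_ge_zero order_trans by blast
  note bounds = assms this
  show ?thesis
  proof (cases "a < b"; cases "a' < b'")
    assume "a < b" "a' < b'"
    then show ?thesis using bounds
      by (intro exI[of _ "{#((a, ereal b), (a', ereal b'))#}"])
         (simp add: eps_matching_def to_interval_atLeastLessThan end_dist_def)
  next
    assume "a < b" "\<not> a' < b'"
    moreover from this bounds have "b - a \<le> 2 * e" by (simp add: abs_le_iff)
    ultimately show ?thesis
      by (intro exI[of _ "{#}"]) (simp add: eps_matching_def to_interval_atLeastLessThan)
  next
    assume "\<not> a < b" "a' < b'"
    moreover from this bounds have "b' - a' \<le> 2 * e" by (simp add: abs_le_iff)
    ultimately show ?thesis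
      by (intro exI[of _ "{#}"]) (simp add: eps_matching_def to_interval_atLeastLessThan)
  next
    assume "\<not> a < b" "\<not> a' < b'"
    then show ?thesis by (intro exI[of _ "{#}"]) (simp add: eps_matching_def)
  qed
qed

lemma eps_matching_atLeast:
  assumes "\<bar>a - a'\<bar> \<le> e"
  shows "\<exists>M. eps_matching e (if {a..} = {} then {#} else {#to_interval {a..}#})
                             (if {a'..} = {} then {#} else {#to_interval {a'..}#}) M"
proof -
  have "0 \<le> e" using assms abs_ge_zero order_trans by blast
  with assms have "eps_matching e {#(a, \<infinity>)#} {#(a', \<infinity>)#} {#((a, \<infinity>), (a', \<infinity>))#}"
    unfolding eps_matching_def end_dist_def by simp
  then show ?thesis unfolding to_interval_atLeast by auto
qed

lemma abs_Min_image_diff_le: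
  fixes F F' :: "'b \<Rightarrow> real"
  assumes "finite T" "T \<noteq> {}" "\<And>\<tau>. \<tau> \<in> T \<Longrightarrow> \<bar>F \<tau> - F' \<tau>\<bar> \<le> e"
  shows "\<bar>Min (F ` T) - Min (F' ` T)\<bar> \<le> e"
proof -
  have "Min (F ` T) \<in> F ` T" "Min (F' ` T) \<in> F' ` T"
    using assms(1,2) by (simp_all add: Min_in)
  then obtain t t' where t: "t \<in> T" "F t = Min (F ` T)" and t': "t' \<in> T" "F' t' = Min (F' ` T)"
    by (metis imageE)
  have "Min (F ` T) \<le> F t'" "Min (F' ` T) \<le> F' t" using t t' assms(1) by auto
  moreover have "\<bar>F t - F' t\<bar> \<le> e" "\<bar>F t' - F' t'\<bar> \<le> e" using t(1) t'(1) assms(3) by blast+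
  ultimately show ?thesis using t(2) t'(2) unfolding abs_le_iff by linarith
qed

lemma bottleneck_lifespan_le_d_I_filtration:
  assumes "finite X" "\<sigma> \<in> pow X"
  shows "bottleneck (lifespan_mset (facegram X F) \<sigma>) (lifespan_mset (facegram X F') \<sigma>)
          \<le> ereal (d_I_filtration X F F')"
proof -
  let ?D = "d_I_filtration X F F'"
  let ?T = "{\<tau>\<in>pow X. \<sigma> \<subset> \<tau>}"
  have D: "\<And>\<sigma>. \<sigma> \<in> pow X \<Longrightarrow> \<bar>F \<sigma> - F' \<sigma>\<bar> \<le> ?D"
    using d_I_filtration_ge[OF assms(1)] .
  have "\<exists>M. eps_matching ?D (lifespan_mset (facegram X F) \<sigma>) (lifespan_mset (facegram X F') \<sigma>) M"
  proof (cases "?T = {}")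
    case True
    then show ?thesis
      unfolding lifespan_mset_def lifespan_facegram_atLeast[OF assms(2) True]
      using eps_matching_atLeast[OF D[OF assms(2)]] by blast
  next
    case False
    have "\<bar>Min (F ` ?T) - Min (F' ` ?T)\<bar> \<le> ?D"
      using abs_Min_image_diff_le[of ?T F F' ?D] finite_pow[OF assms(1)] False D by auto
    then show ?thesis
      unfolding lifespan_mset_def lifespan_facegram_atLeastLessThan[OF assms(1,2) False]
      using eps_matching_atLeastLessThan[OF D[OF assms(2)]] by blast
  qed
  then show ?thesis using bottleneck_le_matching d_I_filtration_nonneg[OF assms(1)] by blast
qed

lemma d_inf_mgm_star_le_d_I_filtration:
  "finite X \<Longrightarrow> d_inf_mgm_star X (facegram X F) (facegram X F') \<le> ereal (d_I_filtration X F F')"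
  unfolding d_inf_mgm_star_def
  by (auto intro!: Sup_least bottleneck_lifespan_le_d_I_filtration d_I_filtration_nonneg)

lemma image_mset_mset_set_eq_sum:
  "finite A \<Longrightarrow> image_mset f (mset_set A) = (\<Sum>x\<in>A. {#f x#})"
  by (induction A rule: finite_induct) auto

lemma mgm_eq_sum_lifespan_mset:
  assumes "finite X"
  shows "mgm X F = (\<Sum>\<sigma>\<in>pow X. lifespan_mset (facegram X F) \<sigma>)"
proof -
  have "mgm X F = (\<Sum>\<sigma>\<in>{\<sigma> \<in> pow X. lifespan (facegram X F) \<sigma> \<noteq> {}}.
                      {#to_interval (lifespan (facegram X F) \<sigma>)#})"
    unfolding mgm_def using finite_pow[OF assms] by (simp add: image_mset_mset_set_eq_sum)
  also have "\<dots> = (\<Sum>\<sigma>\<in>pow X. lifespan_mset (facegram X F) \<sigma>)"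
    unfolding lifespan_mset_def using finite_pow[OF assms]
    by (simp add: sum.inter_filter) (rule sum.cong; simp)
  finally show ?thesis .
qed

lemma bottleneck_mgm_le_d_inf_mgm_star:
  assumes "finite X"
  shows "bottleneck (mgm X F) (mgm X F') \<le> d_inf_mgm_star X (facegram X F) (facegram X F')"
proof (rule bottleneck_leI)
  let ?d = "d_inf_mgm_star X (facegram X F) (facegram X F')"
  show "0 \<le> ?d" unfolding d_inf_mgm_star_def by (auto intro: Sup_upper)
  fix e assume e: "?d < ereal e"
  have "\<exists>M. eps_matching e (lifespan_mset (facegram X F) \<sigma>) (lifespan_mset (facegram X F') \<sigma>) M"
    if "\<sigma> \<in> pow X" for \<sigma>
  proof (rule eps_matching_if_bottleneck_less)
    have "bottleneck (lifespan_mset (facegram X F) \<sigma>) (lifespan_mset (facegram X F') \<sigma>) \<le> ?d"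
      unfolding d_inf_mgm_star_def by (rule Sup_upper) (use that in auto)
    then show "bottleneck (lifespan_mset (facegram X F) \<sigma>) (lifespan_mset (facegram X F') \<sigma>)
                 < ereal e" using e by (rule le_less_trans)
  qed
  then obtain M where
    "\<And>\<sigma>. \<sigma> \<in> pow X \<Longrightarrow>
       eps_matching e (lifespan_mset (facegram X F) \<sigma>) (lifespan_mset (facegram X F') \<sigma>) (M \<sigma>)"
    by metis
  then have "eps_matching e (mgm X F) (mgm X F') (\<Sum>\<sigma>\<in>pow X. M \<sigma>)"
    unfolding mgm_eq_sum_lifespan_mset[OF assms] by (rule eps_matching_sum[OF finite_pow[OF assms]])
  then show "\<exists>M. eps_matching e (mgm X F) (mgm X F') M" ..
qed

theorem mainTheorem15:
  fixes X :: "'a set" and F F' :: "'a set \<Rightarrow> real"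
  assumes "finite X"
    and "filtration X F" and "filtration X F'"
  shows "bottleneck (mgm X F) (mgm X F') \<le> d_inf_mgm_star X (facegram X F) (facegram X F')
       \<and> d_inf_mgm_star X (facegram X F) (facegram X F') \<le> d_I_facegram (facegram X F) (facegram X F')
       \<and> d_I_facegram (facegram X F) (facegram X F') = ereal (d_I_filtration X F F')"
  using bottleneck_mgm_le_d_inf_mgm_star[OF assms(1)]
    d_inf_mgm_star_le_d_I_filtration[OF assms(1)] d_I_facegram_eq_d_I_filtration[OF assms]
  by simp

end
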